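(* Let $\Bbbk$ be a commutative ring, $I$ a category and $(X,\eta,\theta)\colon I\to\Bbbk\text{-}\mathbf{Cat}$ an oplax functor. For each $i\in I_0$ let $Y(i)$ be a small $\Bbbk$-category and $L_i\colon X(i)\to Y(i)$ a left adjoint of $R_i\colon Y(i)\to X(i)$ with unit $\varepsilon_i\colon\mathrm{id}_{X(i)}\Rightarrow R_iL_i$ and counit $\zeta_i\colon L_iR_i\Rightarrow\mathrm{id}_{Y(i)}$. Define $Y(a):=L_jX(a)R_i\colon Y(i)\to Y(j)$ for $a\colon i\to j$; $\eta'_i:=\zeta_i\circ L_i\eta_iR_i\colon Y(\mathrm{id}_i)\Rightarrow\mathrm{id}_{Y(i)}$; and for $i\xrightarrow{a}j\xrightarrow{b}k$, $\theta'_{b,a}:=L_kX(b)\varepsilon_jX(a)R_i\circ L_k\theta_{b,a}R_i\colon Y(ba)\Rightarrow Y(b)Y(a)$. Then: (1) $(Y,\eta',\theta')$ is an oplax functor $I\to\Bbbk\text{-}\mathbf{Cat}$; (2) setting $R(i):=R_i$ and $\phi^R(a):=\varepsilon_jX(a)R_i$ for $a\colon i\to j$, $(R,\phi^R)\colon Y\to X$ is a $1$-morphism in $\overleftarrow{\operatorname{Oplax}}(I,\Bbbk\text{-}\mathbf{Cat})$; (3) if moreover every $\varepsilon_i$ is an isomorphism, then (a) $\phi^R(a)$ is an isomorphism for every morphism $a$ of $I$, and (b) setting $L(i):=L_i$ and $\phi^L(a):=L_jX(a)\varepsilon_i^{-1}$ for $a\colon i\to j$, $(L,\phi^L)\colon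 X\to Y$ is a $1$-morphism in $\overleftarrow{\operatorname{Oplax}}(I,\Bbbk\text{-}\mathbf{Cat})$ with all $\phi^L(a)$ isomorphisms.
   Context: An oplax functor $(X,\eta,\theta)\colon I\to\mathbf{C}$ into a 2-category consists of objects $X(i)$, 1-morphisms $X(a)\colon X(i)\to X(j)$, 2-morphisms $\eta_i\colon X(\mathrm{id}_i)\Rightarrow\mathrm{id}_{X(i)}$ and $\theta_{b,a}\colon X(ba)\Rightarrow X(b)X(a)$ with $X(a)\eta_i\circ\theta_{a,\mathrm{id}_i}=\mathrm{id}_{X(a)}$, $\eta_jX(a)\circ\theta_{\mathrm{id}_j,a}=\mathrm{id}_{X(a)}$, and $X(c)\theta_{b,a}\circ\theta_{c,ba}=\theta_{c,b}X(a)\circ\theta_{cb,a}$. $\overleftarrow{\operatorname{Oplax}}(I,\mathbf{C})$ is the 2-category of oplax functors $I\to\mathbf{C}$, where a 1-morphism $(F,\psi)\colon(X,\eta,\theta)\to(X',\eta',\theta')$ consists of 1-morphisms $F(i)\colon X(i)\to X'(i)$ and 2-morphisms $\psi(a)\colon X'(a)F(i)\Rightarrow F(j)X(a)$ ($a\colon i\to j$) with $F(i)\eta_i\circ\psi(\mathrm{id}_i)=\eta'_iF(i)$ and $F(k)\theta_{b,a}\circ\psi(ba)=\psi(b)X(a)\circ X'(b)\psi(a)\circ\theta'_{b,a}F(i)$. *)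

theory Defs
  imports Main
begin

text \<open>A small category: a set of objects, hom-sets, a composition
  (cmp g f = g after f) and identities.  Hom-sets are required to be pairwise
  disjoint (each arrow has a unique domain and codomain).\<close>

record ('o, 'm) cat =
  Ob  :: "'o set"
  Hom :: "'o \<Rightarrow> 'o \<Rightarrow> 'm set"
  cmp :: "'m \<Rightarrow> 'm \<Rightarrow> 'm"
  idm :: "'o \<Rightarrow> 'm"

definition is_category :: "('o, 'm, 'x) cat_scheme \<Rightarrow> bool" where
  "is_category C \<longleftrightarrow>
     (\<forall>x y. Hom C x y \<noteq> {} \<longrightarrow> x \<in> Ob C \<and> y \<in> Ob C) \<and>
     (\<forall>x y x' y' f. f \<in> Hom C x y \<and> f \<in> Hom C x' y' \<longrightarrow> x = x' \<and> y = y') \<and>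
     (\<forall>x\<in>Ob C. idm C x \<in> Hom C x x) \<and>
     (\<forall>x y z f g. f \<in> Hom C x y \<and> g \<in> Hom C y z \<longrightarrow> cmp C g f \<in> Hom C x z) \<and>
     (\<forall>w x y z f g h. f \<in> Hom C w x \<and> g \<in> Hom C x y \<and> h \<in> Hom C y z \<longrightarrow>
         cmp C h (cmp C g f) = cmp C (cmp C h g) f) \<and>
     (\<forall>x y f. f \<in> Hom C x y \<longrightarrow> cmp C (idm C y) f = f \<and> cmp C f (idm C x) = f)"

record ('o, 'm, 'k) kcat = "('o, 'm) cat" +
  kadd   :: "'m \<Rightarrow> 'm \<Rightarrow> 'm"
  ksmult :: "'k \<Rightarrow> 'm \<Rightarrow> 'm"
  kzero  :: "'o \<Rightarrow> 'o \<Rightarrow> 'm"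

definition is_kcategory :: "('o, 'm, 'k::comm_ring_1, 'x) kcat_scheme \<Rightarrow> bool" where
  "is_kcategory C \<longleftrightarrow> is_category C \<and>
     (\<forall>x\<in>Ob C. \<forall>y\<in>Ob C.
        kzero C x y \<in> Hom C x y \<and>
        (\<forall>f\<in>Hom C x y. \<forall>g\<in>Hom C x y. kadd C f g \<in> Hom C x y) \<and>
        (\<forall>r. \<forall>f\<in>Hom C x y. ksmult C r f \<in> Hom C x y) \<and>
        (\<forall>f\<in>Hom C x y. \<forall>g\<in>Hom C x y. \<forall>h\<in>Hom C x y.
            kadd C (kadd C f g) h = kadd C f (kadd C g h)) \<and>
        (\<forall>f\<in>Hom C x y. \<forall>g\<in>Hom C x y. kadd C f g = kadd C g f) \<and>
        (\<forall>f\<in>Hom C x y. kadd C (kzero C x y) f = f) \<and>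
        (\<forall>f\<in>Hom C x y. \<exists>g\<in>Hom C x y. kadd C f g = kzero C x y) \<and>
        (\<forall>r. \<forall>f\<in>Hom C x y. \<forall>g\<in>Hom C x y.
            ksmult C r (kadd C f g) = kadd C (ksmult C r f) (ksmult C r g)) \<and>
        (\<forall>r s. \<forall>f\<in>Hom C x y. ksmult C (r + s) f = kadd C (ksmult C r f) (ksmult C s f)) \<and>
        (\<forall>r s. \<forall>f\<in>Hom C x y. ksmult C (r * s) f = ksmult C r (ksmult C s f)) \<and>
        (\<forall>f\<in>Hom C x y. ksmult C 1 f = f)) \<and>
     (\<forall>x y z f f' g g'. f \<in> Hom C x y \<and> f' \<in> Hom C x y \<and> g \<in> Hom C y z \<and> g' \<in> Hom C y z \<longrightarrow>
        cmp C (kadd C g g') f = kadd C (cmp C g f) (cmp C g' f) \<and>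
        cmp C g (kadd C f f') = kadd C (cmp C g f) (cmp C g f')) \<and>
     (\<forall>x y z f g r. f \<in> Hom C x y \<and> g \<in> Hom C y z \<longrightarrow>
        cmp C (ksmult C r g) f = ksmult C r (cmp C g f) \<and>
        cmp C g (ksmult C r f) = ksmult C r (cmp C g f))"

type_synonym ('o, 'm) func = "('o \<Rightarrow> 'o) \<times> ('m \<Rightarrow> 'm)"

abbreviation fo :: "('o, 'm) func \<Rightarrow> 'o \<Rightarrow> 'o" where "fo F \<equiv> fst F"
abbreviation fm :: "('o, 'm) func \<Rightarrow> 'm \<Rightarrow> 'm" where "fm F \<equiv> snd F"

definition idF :: "('o, 'm) func" where "idF = (\<lambda>x. x, \<lambda>f. f)"

definition fcompose :: "('o, 'm) func \<Rightarrow> ('o, 'm) func \<Rightarrow> ('o, 'm) func" where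
  "fcompose G F = (fo G \<circ> fo F, fm G \<circ> fm F)"

definition is_kfunctor ::
  "('o, 'm, 'k::comm_ring_1) kcat \<Rightarrow> ('o, 'm, 'k) kcat \<Rightarrow> ('o, 'm) func \<Rightarrow> bool" where
  "is_kfunctor C D F \<longleftrightarrow>
     (\<forall>x\<in>Ob C. fo F x \<in> Ob D) \<and>
     (\<forall>x y f. f \<in> Hom C x y \<longrightarrow> fm F f \<in> Hom D (fo F x) (fo F y)) \<and>
     (\<forall>x\<in>Ob C. fm F (idm C x) = idm D (fo F x)) \<and>
     (\<forall>x y z f g. f \<in> Hom C x y \<and> g \<in> Hom C y z \<longrightarrow> fm F (cmp C g f) = cmp D (fm F g) (fm F f)) \<and>
     (\<forall>x y f g. f \<in> Hom C x y \<and> g \<in> Hom C x y \<longrightarrow> fm F (kadd C f g) = kadd D (fm F f) (fm F g)) \<and>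
     (\<forall>x y f r. f \<in> Hom C x y \<longrightarrow> fm F (ksmult C r f) = ksmult D r (fm F f))"

definition is_nat_trans ::
  "('o, 'm, 'k) kcat \<Rightarrow> ('o, 'm, 'k) kcat \<Rightarrow> ('o, 'm) func \<Rightarrow> ('o, 'm) func \<Rightarrow> ('o \<Rightarrow> 'm) \<Rightarrow> bool" where
  "is_nat_trans C D F G \<alpha> \<longleftrightarrow>
     (\<forall>x\<in>Ob C. \<alpha> x \<in> Hom D (fo F x) (fo G x)) \<and>
     (\<forall>x y f. f \<in> Hom C x y \<longrightarrow> cmp D (fm G f) (\<alpha> x) = cmp D (\<alpha> y) (fm F f))"

definition is_nat_iso ::
  "('o, 'm, 'k) kcat \<Rightarrow> ('o, 'm, 'k) kcat \<Rightarrow> ('o, 'm) func \<Rightarrow> ('o, 'm) func \<Rightarrow> ('o \<Rightarrow> 'm) \<Rightarrow> bool" where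
  "is_nat_iso C D F G \<alpha> \<longleftrightarrow> is_nat_trans C D F G \<alpha> \<and>
     (\<exists>\<beta>. is_nat_trans C D G F \<beta> \<and>
        (\<forall>x\<in>Ob C. cmp D (\<beta> x) (\<alpha> x) = idm D (fo F x) \<and> cmp D (\<alpha> x) (\<beta> x) = idm D (fo G x)))"

definition is_adjunction ::
  "('o, 'm, 'k::comm_ring_1) kcat \<Rightarrow> ('o, 'm, 'k) kcat \<Rightarrow> ('o, 'm) func \<Rightarrow> ('o, 'm) func
     \<Rightarrow> ('o \<Rightarrow> 'm) \<Rightarrow> ('o \<Rightarrow> 'm) \<Rightarrow> bool" where
  "is_adjunction C D L R \<epsilon> \<zeta> \<longleftrightarrow>
     is_kfunctor C D L \<and> is_kfunctor D C R \<and>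
     is_nat_trans C C idF (fcompose R L) \<epsilon> \<and> is_nat_trans D D (fcompose L R) idF \<zeta> \<and>
     (\<forall>x\<in>Ob C. cmp D (\<zeta> (fo L x)) (fm L (\<epsilon> x)) = idm D (fo L x)) \<and>
     (\<forall>y\<in>Ob D. cmp C (fm R (\<zeta> y)) (\<epsilon> (fo R y)) = idm C (fo R y))"

definition arr_dom :: "('io, 'ia, 'x) cat_scheme \<Rightarrow> 'ia \<Rightarrow> 'io" where
  "arr_dom I a = (THE i. \<exists>j. a \<in> Hom I i j)"

definition arr_cod :: "('io, 'ia, 'x) cat_scheme \<Rightarrow> 'ia \<Rightarrow> 'io" where
  "arr_cod I a = (THE j. \<exists>i. a \<in> Hom I i j)"

text \<open>(Xc, Xf, eta, theta): Xc i = X(i), Xf a = X(a), eta i = eta_i,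
  theta b a = theta_{b,a}.\<close>
definition is_oplax_functor ::
  "('io, 'ia) cat \<Rightarrow> ('io \<Rightarrow> ('o, 'm, 'k::comm_ring_1) kcat) \<Rightarrow> ('ia \<Rightarrow> ('o, 'm) func)
     \<Rightarrow> ('io \<Rightarrow> 'o \<Rightarrow> 'm) \<Rightarrow> ('ia \<Rightarrow> 'ia \<Rightarrow> 'o \<Rightarrow> 'm) \<Rightarrow> bool" where
  "is_oplax_functor I Xc Xf \<eta> \<theta> \<longleftrightarrow>
     (\<forall>i\<in>Ob I. is_kcategory (Xc i)) \<and>
     (\<forall>i j a. a \<in> Hom I i j \<longrightarrow> is_kfunctor (Xc i) (Xc j) (Xf a)) \<and>
     (\<forall>i\<in>Ob I. is_nat_trans (Xc i) (Xc i) (Xf (idm I i)) idF (\<eta> i)) \<and>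
     (\<forall>i j k a b. a \<in> Hom I i j \<and> b \<in> Hom I j k \<longrightarrow>
        is_nat_trans (Xc i) (Xc k) (Xf (cmp I b a)) (fcompose (Xf b) (Xf a)) (\<theta> b a)) \<and>
     (\<forall>i j a. a \<in> Hom I i j \<longrightarrow> (\<forall>x\<in>Ob (Xc i).
        cmp (Xc j) (fm (Xf a) (\<eta> i x)) (\<theta> a (idm I i) x) = idm (Xc j) (fo (Xf a) x) \<and>
        cmp (Xc j) (\<eta> j (fo (Xf a) x)) (\<theta> (idm I j) a x) = idm (Xc j) (fo (Xf a) x))) \<and>
     (\<forall>i j k l a b c. a \<in> Hom I i j \<and> b \<in> Hom I j k \<and> c \<in> Hom I k l \<longrightarrow>
        (\<forall>x\<in>Ob (Xc i).
          cmp (Xc l) (fm (Xf c) (\<theta> b a x)) (\<theta> c (cmp I b a) x)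
          = cmp (Xc l) (\<theta> c b (fo (Xf a) x)) (\<theta> (cmp I c b) a x)))"

definition is_oplax_morphism ::
  "('io, 'ia) cat
   \<Rightarrow> ('io \<Rightarrow> ('o, 'm, 'k::comm_ring_1) kcat) \<Rightarrow> ('ia \<Rightarrow> ('o, 'm) func)
     \<Rightarrow> ('io \<Rightarrow> 'o \<Rightarrow> 'm) \<Rightarrow> ('ia \<Rightarrow> 'ia \<Rightarrow> 'o \<Rightarrow> 'm)
   \<Rightarrow> ('io \<Rightarrow> ('o, 'm, 'k) kcat) \<Rightarrow> ('ia \<Rightarrow> ('o, 'm) func)
     \<Rightarrow> ('io \<Rightarrow> 'o \<Rightarrow> 'm) \<Rightarrow> ('ia \<Rightarrow> 'ia \<Rightarrow> 'o \<Rightarrow> 'm)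
   \<Rightarrow> ('io \<Rightarrow> ('o, 'm) func) \<Rightarrow> ('ia \<Rightarrow> 'o \<Rightarrow> 'm) \<Rightarrow> bool" where
  "is_oplax_morphism I Xc Xf \<eta> \<theta> Xc' Xf' \<eta>' \<theta>' F \<psi> \<longleftrightarrow>
     (\<forall>i\<in>Ob I. is_kfunctor (Xc i) (Xc' i) (F i)) \<and>
     (\<forall>i j a. a \<in> Hom I i j \<longrightarrow>
        is_nat_trans (Xc i) (Xc' j) (fcompose (Xf' a) (F i)) (fcompose (F j) (Xf a)) (\<psi> a)) \<and>
     (\<forall>i\<in>Ob I. \<forall>x\<in>Ob (Xc i).
        cmp (Xc' i) (fm (F i) (\<eta> i x)) (\<psi> (idm I i) x) = \<eta>' i (fo (F i) x)) \<and>
     (\<forall>i j k a b. a \<in> Hom I i j \<and> b \<in> Hom I j k \<longrightarrow> (\<forall>x\<in>Ob (Xc i).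
        cmp (Xc' k) (fm (F k) (\<theta> b a x)) (\<psi> (cmp I b a) x)
        = cmp (Xc' k) (\<psi> b (fo (Xf a) x))
            (cmp (Xc' k) (fm (Xf' b) (\<psi> a x)) (\<theta>' b a (fo (F i) x)))))"

end

theory Submission
  imports Defs
begin

text \<open>Each structure map of the transported functor Y, and each component of \<open>\<phi>R\<close> and
  \<open>\<phi>L\<close>, is a vertical composite of whiskerings of \<open>\<eta>\<close>, \<open>\<theta>\<close>, \<open>\<epsilon>\<close>, \<open>\<zeta>\<close> (or \<open>\<epsilon>\<inverse>\<close>)
  by functors, so all naturality and invertibility claims reduce to general facts about
  whiskering. The coherence axioms are diagram chases: naturality of \<open>\<epsilon>\<close>, \<open>\<eta>\<close> or \<open>\<theta>\<close>
  moves the inserted unit \<open>\<epsilon>\<close> out of the way, and then a triangle identity of the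
  adjunction together with the corresponding coherence axiom of X closes the diagram.
  When \<open>\<epsilon>\<close> is invertible, \<open>L \<epsilon>\<inverse>\<close> coincides with \<open>\<zeta> L\<close>, which is what makes
  \<open>(L, \<phi>L)\<close> compatible with \<open>\<eta>'\<close>.\<close>

section \<open>Categories\<close>

text \<open>Hom-set membership is rephrased through \<open>arr\<close>, \<open>arr_dom\<close> and \<open>arr_cod\<close>, so that
  the simplifier can compute domains and codomains of composite arrows.\<close>

definition arr :: "('o, 'm, 'x) cat_scheme \<Rightarrow> 'm \<Rightarrow> bool" where
  "arr C f \<longleftrightarrow> (\<exists>x y. f \<in> Hom C x y)"

lemma hom_ob: "is_category C \<Longrightarrow> f \<in> Hom C x y \<Longrightarrow> x \<in> Ob C \<and> y \<in> Ob C"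
  unfolding is_category_def by (metis empty_iff)

lemma hom_unique: "is_category C \<Longrightarrow> f \<in> Hom C x y \<Longrightarrow> f \<in> Hom C x' y' \<Longrightarrow> x = x' \<and> y = y'"
  unfolding is_category_def by meson

lemma idm_hom: "is_category C \<Longrightarrow> x \<in> Ob C \<Longrightarrow> idm C x \<in> Hom C x x"
  unfolding is_category_def by blast

lemma cmp_hom: "is_category C \<Longrightarrow> f \<in> Hom C x y \<Longrightarrow> g \<in> Hom C y z \<Longrightarrow> cmp C g f \<in> Hom C x z"
  unfolding is_category_def by blast

lemma cmp_assoc_hom: "is_category C \<Longrightarrow> f \<in> Hom C w x \<Longrightarrow> g \<in> Hom C x y \<Longrightarrow> h \<in> Hom C y z \<Longrightarrow>
    cmp C (cmp C h g) f = cmp C h (cmp C g f)"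
  unfolding is_category_def by metis

lemma cmp_idm_hom: "is_category C \<Longrightarrow> f \<in> Hom C x y \<Longrightarrow> cmp C (idm C y) f = f \<and> cmp C f (idm C x) = f"
  unfolding is_category_def by blast

lemma arr_dom_cod: "is_category C \<Longrightarrow> f \<in> Hom C x y \<Longrightarrow> arr_dom C f = x \<and> arr_cod C f = y"
proof -
  assume "is_category C" and f: "f \<in> Hom C x y"
  then have "f \<in> Hom C x' y' \<Longrightarrow> x' = x \<and> y' = y" for x' y'
    using hom_unique by metis
  then show ?thesis
    unfolding arr_dom_def arr_cod_def using f by (intro conjI the_equality) blast+
qed

lemma hom_iff: "is_category C \<Longrightarrow> f \<in> Hom C x y \<longleftrightarrow> arr C f \<and> arr_dom C f = x \<and> arr_cod C f = y"
  unfolding arr_def using arr_dom_cod by metis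

lemma arr_hom: "is_category C \<Longrightarrow> arr C f \<Longrightarrow> f \<in> Hom C (arr_dom C f) (arr_cod C f)"
  using hom_iff unfolding arr_def by metis

lemma dom_ob [simp]: "is_category C \<Longrightarrow> arr C f \<Longrightarrow> arr_dom C f \<in> Ob C"
  using arr_hom hom_ob by metis

lemma cod_ob [simp]: "is_category C \<Longrightarrow> arr C f \<Longrightarrow> arr_cod C f \<in> Ob C"
  using arr_hom hom_ob by metis

lemma cmp_hom_arr: "is_category C \<Longrightarrow> arr C f \<Longrightarrow> arr C g \<Longrightarrow> arr_cod C f = arr_dom C g \<Longrightarrow>
    cmp C g f \<in> Hom C (arr_dom C f) (arr_cod C g)"
  using arr_hom cmp_hom by metis

lemma arr_cmp [simp]: "is_category C \<Longrightarrow> arr C f \<Longrightarrow> arr C g \<Longrightarrow> arr_cod C f = arr_dom C g \<Longrightarrow>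
    arr C (cmp C g f)"
  using cmp_hom_arr arr_def by metis

lemma dom_cmp [simp]: "is_category C \<Longrightarrow> arr C f \<Longrightarrow> arr C g \<Longrightarrow> arr_cod C f = arr_dom C g \<Longrightarrow>
    arr_dom C (cmp C g f) = arr_dom C f"
  using cmp_hom_arr arr_dom_cod by metis

lemma cod_cmp [simp]: "is_category C \<Longrightarrow> arr C f \<Longrightarrow> arr C g \<Longrightarrow> arr_cod C f = arr_dom C g \<Longrightarrow>
    arr_cod C (cmp C g f) = arr_cod C g"
  using cmp_hom_arr arr_dom_cod by metis

lemma cmp_assoc [simp]: "is_category C \<Longrightarrow> arr C f \<Longrightarrow> arr C g \<Longrightarrow> arr C h \<Longrightarrow>
    arr_cod C f = arr_dom C g \<Longrightarrow> arr_cod C g = arr_dom C h \<Longrightarrow>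
    cmp C (cmp C h g) f = cmp C h (cmp C g f)"
  using arr_hom cmp_assoc_hom by metis

lemma arr_idm [simp]: "is_category C \<Longrightarrow> x \<in> Ob C \<Longrightarrow> arr C (idm C x)"
  using idm_hom arr_def by metis

lemma dom_idm [simp]: "is_category C \<Longrightarrow> x \<in> Ob C \<Longrightarrow> arr_dom C (idm C x) = x"
  using idm_hom arr_dom_cod by metis

lemma cod_idm [simp]: "is_category C \<Longrightarrow> x \<in> Ob C \<Longrightarrow> arr_cod C (idm C x) = x"
  using idm_hom arr_dom_cod by metis

lemma cmp_idm_left [simp]: "is_category C \<Longrightarrow> arr C f \<Longrightarrow> arr_cod C f = y \<Longrightarrow> cmp C (idm C y) f = f"
  using arr_hom cmp_idm_hom by metis

lemma cmp_idm_right [simp]: "is_category C \<Longrightarrow> arr C f \<Longrightarrow> arr_dom C f = x \<Longrightarrow> cmp C f (idm C x) = f"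
  using arr_hom cmp_idm_hom by metis

text \<open>The next two lemmas let the simplifier use an equation between composites
  of two arrows inside right-nested composites of three.\<close>

lemma cmp_eq_assoc:
  assumes "is_category C" "cmp C g f = cmp C k h"
    and "arr C f" "arr C g" "arr C h" "arr C k"
    and "arr_cod C f = arr_dom C g" "arr_cod C h = arr_dom C k" "arr_dom C f = arr_dom C h"
    and "arr C t" "arr_cod C t = arr_dom C f"
  shows "cmp C g (cmp C f t) = cmp C k (cmp C h t)"
  using assms cmp_assoc by metis

lemma cmp_inverse_assoc:
  assumes "is_category C" "cmp C g f = idm C z"
    and "arr C f" "arr C g" "z \<in> Ob C" "arr_cod C f = arr_dom C g"
    and "arr C t" "arr_cod C t = arr_dom C f"
  shows "cmp C g (cmp C f t) = t"
  using assms by (metis cmp_assoc cmp_idm_left dom_cmp dom_idm)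

lemma kcategory_is_category: "is_kcategory C \<Longrightarrow> is_category C"
  unfolding is_kcategory_def by blast

section \<open>Functors and natural transformations\<close>

lemma kfunctor_ob: "is_kfunctor C D F \<Longrightarrow> x \<in> Ob C \<Longrightarrow> fo F x \<in> Ob D"
  unfolding is_kfunctor_def by blast

lemma kfunctor_hom: "is_kfunctor C D F \<Longrightarrow> f \<in> Hom C x y \<Longrightarrow> fm F f \<in> Hom D (fo F x) (fo F y)"
  unfolding is_kfunctor_def by blast

lemma kfunctor_cmp_hom: "is_kfunctor C D F \<Longrightarrow> f \<in> Hom C x y \<Longrightarrow> g \<in> Hom C y z \<Longrightarrow>
    fm F (cmp C g f) = cmp D (fm F g) (fm F f)"
  unfolding is_kfunctor_def by blast

lemma kfunctor_idm: "is_kfunctor C D F \<Longrightarrow> x \<in> Ob C \<Longrightarrow> fm F (idm C x) = idm D (fo F x)"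
  unfolding is_kfunctor_def by blast

lemma kfunctor_arr: "is_kfunctor C D F \<Longrightarrow> is_category C \<Longrightarrow> is_category D \<Longrightarrow> arr C f \<Longrightarrow>
    arr D (fm F f)"
  using kfunctor_hom arr_hom arr_def by metis

lemma kfunctor_dom: "is_kfunctor C D F \<Longrightarrow> is_category C \<Longrightarrow> is_category D \<Longrightarrow> arr C f \<Longrightarrow>
    arr_dom D (fm F f) = fo F (arr_dom C f)"
  using kfunctor_hom arr_hom arr_dom_cod by metis

lemma kfunctor_cod: "is_kfunctor C D F \<Longrightarrow> is_category C \<Longrightarrow> is_category D \<Longrightarrow> arr C f \<Longrightarrow>
    arr_cod D (fm F f) = fo F (arr_cod C f)"
  using kfunctor_hom arr_hom arr_dom_cod by metis

lemma kfunctor_cmp: "is_kfunctor C D F \<Longrightarrow> is_category C \<Longrightarrow> arr C f \<Longrightarrow> arr C g \<Longrightarrow>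
    arr_cod C f = arr_dom C g \<Longrightarrow> fm F (cmp C g f) = cmp D (fm F g) (fm F f)"
  using arr_hom kfunctor_cmp_hom by metis

lemma fo_fm_fcompose [simp]:
  "fo (fcompose G F) = fo G \<circ> fo F" "fm (fcompose G F) = fm G \<circ> fm F"
  "fo idF = (\<lambda>x. x)" "fm idF = (\<lambda>f. f)"
  by (simp_all add: fcompose_def idF_def)

lemma fcompose_assoc [simp]: "fcompose (fcompose H G) F = fcompose H (fcompose G F)"
  by (simp add: fcompose_def comp_assoc)

lemma fcompose_idF [simp]: "fcompose idF F = F" "fcompose F idF = F"
  by (simp_all add: fcompose_def idF_def comp_def)

lemma kfunctor_idF: "is_kfunctor C C idF"
  unfolding is_kfunctor_def by simp

lemma kfunctor_fcompose: "is_kfunctor C D F \<Longrightarrow> is_kfunctor D E G \<Longrightarrow> is_kfunctor C E (fcompose G F)"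
  unfolding is_kfunctor_def by (simp; meson)

lemma nat_trans_hom: "is_nat_trans C D F G \<alpha> \<Longrightarrow> x \<in> Ob C \<Longrightarrow> \<alpha> x \<in> Hom D (fo F x) (fo G x)"
  unfolding is_nat_trans_def by blast

lemma nat_trans_naturality_hom: "is_nat_trans C D F G \<alpha> \<Longrightarrow> f \<in> Hom C x y \<Longrightarrow>
    cmp D (fm G f) (\<alpha> x) = cmp D (\<alpha> y) (fm F f)"
  unfolding is_nat_trans_def by blast

lemma nat_trans_arr: "is_nat_trans C D F G \<alpha> \<Longrightarrow> is_category D \<Longrightarrow> x \<in> Ob C \<Longrightarrow> arr D (\<alpha> x)"
  using nat_trans_hom arr_def by metis

lemma nat_trans_dom: "is_nat_trans C D F G \<alpha> \<Longrightarrow> is_category D \<Longrightarrow> x \<in> Ob C \<Longrightarrow>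
    arr_dom D (\<alpha> x) = fo F x"
  using nat_trans_hom arr_dom_cod by metis

lemma nat_trans_cod: "is_nat_trans C D F G \<alpha> \<Longrightarrow> is_category D \<Longrightarrow> x \<in> Ob C \<Longrightarrow>
    arr_cod D (\<alpha> x) = fo G x"
  using nat_trans_hom arr_dom_cod by metis

lemma nat_trans_naturality: "is_nat_trans C D F G \<alpha> \<Longrightarrow> is_category C \<Longrightarrow> arr C f \<Longrightarrow>
    cmp D (fm G f) (\<alpha> (arr_dom C f)) = cmp D (\<alpha> (arr_cod C f)) (fm F f)"
  using arr_hom nat_trans_naturality_hom by metis

lemma nat_trans_whisker_left:
  assumes C: "is_category C" and \<alpha>: "is_nat_trans C D F G \<alpha>"
    and F: "is_kfunctor C D F" and G: "is_kfunctor C D G" and H: "is_kfunctor D E H"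
  shows "is_nat_trans C E (fcompose H F) (fcompose H G) (\<lambda>x. fm H (\<alpha> x))"
  unfolding is_nat_trans_def
proof (intro conjI ballI allI impI)
  fix x assume "x \<in> Ob C"
  then show "fm H (\<alpha> x) \<in> Hom E (fo (fcompose H F) x) (fo (fcompose H G) x)"
    using kfunctor_hom[OF H nat_trans_hom[OF \<alpha>]] by simp
next
  fix x y f assume f: "f \<in> Hom C x y"
  then have "x \<in> Ob C" "y \<in> Ob C" using hom_ob[OF C] by blast+
  have "fm H (cmp D (fm G f) (\<alpha> x)) = fm H (cmp D (\<alpha> y) (fm F f))"
    using nat_trans_naturality_hom[OF \<alpha> f] by simp
  moreover have "fm H (cmp D (fm G f) (\<alpha> x)) = cmp E (fm H (fm G f)) (fm H (\<alpha> x))"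
    by (rule kfunctor_cmp_hom[OF H nat_trans_hom[OF \<alpha> \<open>x \<in> Ob C\<close>] kfunctor_hom[OF G f]])
  moreover have "fm H (cmp D (\<alpha> y) (fm F f)) = cmp E (fm H (\<alpha> y)) (fm H (fm F f))"
    by (rule kfunctor_cmp_hom[OF H kfunctor_hom[OF F f] nat_trans_hom[OF \<alpha> \<open>y \<in> Ob C\<close>]])
  ultimately show "cmp E (fm (fcompose H G) f) (fm H (\<alpha> x)) = cmp E (fm H (\<alpha> y)) (fm (fcompose H F) f)"
    by simp
qed

lemma nat_trans_whisker_right:
  assumes \<alpha>: "is_nat_trans C D F G \<alpha>" and K: "is_kfunctor B C K"
  shows "is_nat_trans B D (fcompose F K) (fcompose G K) (\<lambda>x. \<alpha> (fo K x))"
  using kfunctor_ob[OF K] kfunctor_hom[OF K] nat_trans_hom[OF \<alpha>] nat_trans_naturality_hom[OF \<alpha>]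
  unfolding is_nat_trans_def by simp

lemma nat_trans_vcomp:
  assumes C: "is_category C" and D: "is_category D"
    and F: "is_kfunctor C D F" and G: "is_kfunctor C D G" and H: "is_kfunctor C D H"
    and \<alpha>: "is_nat_trans C D F G \<alpha>" and \<beta>: "is_nat_trans C D G H \<beta>"
  shows "is_nat_trans C D F H (\<lambda>x. cmp D (\<beta> x) (\<alpha> x))"
  unfolding is_nat_trans_def
proof (intro conjI ballI allI impI)
  fix x assume "x \<in> Ob C"
  then show "cmp D (\<beta> x) (\<alpha> x) \<in> Hom D (fo F x) (fo H x)"
    using nat_trans_hom[OF \<alpha>] nat_trans_hom[OF \<beta>] cmp_hom[OF D] by blast
next
  fix x y f assume f: "f \<in> Hom C x y"
  then have x: "x \<in> Ob C" and y: "y \<in> Ob C" using hom_ob[OF C] by blast+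
  note homs = nat_trans_hom[OF \<alpha> x] nat_trans_hom[OF \<beta> x] nat_trans_hom[OF \<alpha> y]
    nat_trans_hom[OF \<beta> y] kfunctor_hom[OF F f] kfunctor_hom[OF G f] kfunctor_hom[OF H f]
  have "cmp D (fm H f) (cmp D (\<beta> x) (\<alpha> x)) = cmp D (cmp D (fm H f) (\<beta> x)) (\<alpha> x)"
    using homs cmp_assoc_hom[OF D] by metis
  also have "\<dots> = cmp D (cmp D (\<beta> y) (fm G f)) (\<alpha> x)"
    using nat_trans_naturality_hom[OF \<beta> f] by simp
  also have "\<dots> = cmp D (\<beta> y) (cmp D (fm G f) (\<alpha> x))"
    using homs cmp_assoc_hom[OF D] by metis
  also have "\<dots> = cmp D (\<beta> y) (cmp D (\<alpha> y) (fm F f))"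
    using nat_trans_naturality_hom[OF \<alpha> f] by simp
  also have "\<dots> = cmp D (cmp D (\<beta> y) (\<alpha> y)) (fm F f)"
    using homs cmp_assoc_hom[OF D] by metis
  finally show "cmp D (fm H f) (cmp D (\<beta> x) (\<alpha> x)) = cmp D (cmp D (\<beta> y) (\<alpha> y)) (fm F f)" .
qed

lemma nat_iso_whisker_left:
  assumes C: "is_category C" and \<alpha>: "is_nat_iso C D F G \<alpha>"
    and F: "is_kfunctor C D F" and G: "is_kfunctor C D G" and H: "is_kfunctor D E H"
  shows "is_nat_iso C E (fcompose H F) (fcompose H G) (\<lambda>x. fm H (\<alpha> x))"
proof -
  obtain \<beta> where \<beta>: "is_nat_trans C D G F \<beta>"
    and inv: "\<And>x. x \<in> Ob C \<Longrightarrow> cmp D (\<beta> x) (\<alpha> x) = idm D (fo F x) \<and> cmp D (\<alpha> x) (\<beta> x) = idm D (fo G x)"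
    using \<alpha> unfolding is_nat_iso_def by blast
  have \<alpha>': "is_nat_trans C D F G \<alpha>" using \<alpha> unfolding is_nat_iso_def by blast
  have "cmp E (fm H (\<beta> x)) (fm H (\<alpha> x)) = idm E (fo (fcompose H F) x) \<and>
        cmp E (fm H (\<alpha> x)) (fm H (\<beta> x)) = idm E (fo (fcompose H G) x)" if x: "x \<in> Ob C" for x
    using inv[OF x] kfunctor_cmp_hom[OF H] nat_trans_hom[OF \<alpha>' x] nat_trans_hom[OF \<beta> x]
      kfunctor_idm[OF H] kfunctor_ob[OF F x] kfunctor_ob[OF G x] by fastforce
  then show ?thesis
    using nat_trans_whisker_left[OF C \<alpha>' F G H] nat_trans_whisker_left[OF C \<beta> G F H]
    unfolding is_nat_iso_def by blast
qed

lemma nat_iso_whisker_right: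
  assumes \<alpha>: "is_nat_iso C D F G \<alpha>" and K: "is_kfunctor B C K"
  shows "is_nat_iso B D (fcompose F K) (fcompose G K) (\<lambda>x. \<alpha> (fo K x))"
proof -
  obtain \<beta> where \<beta>: "is_nat_trans C D G F \<beta>"
    and inv: "\<And>x. x \<in> Ob C \<Longrightarrow> cmp D (\<beta> x) (\<alpha> x) = idm D (fo F x) \<and> cmp D (\<alpha> x) (\<beta> x) = idm D (fo G x)"
    using \<alpha> unfolding is_nat_iso_def by blast
  have \<alpha>': "is_nat_trans C D F G \<alpha>" using \<alpha> unfolding is_nat_iso_def by blast
  show ?thesis
    using nat_trans_whisker_right[OF \<alpha>' K] nat_trans_whisker_right[OF \<beta> K] inv kfunctor_ob[OF K]
    unfolding is_nat_iso_def by (intro conjI exI[of _ "\<lambda>x. \<beta> (fo K x)"]) auto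
qed


section \<open>Transport of an oplax functor along adjunctions\<close>

locale oplax_transport =
  fixes I :: "('io, 'ia) cat"
    and Xc :: "'io \<Rightarrow> ('o, 'm, 'k::comm_ring_1) kcat"
    and Xf :: "'ia \<Rightarrow> ('o, 'm) func"
    and \<eta> :: "'io \<Rightarrow> 'o \<Rightarrow> 'm"
    and \<theta> :: "'ia \<Rightarrow> 'ia \<Rightarrow> 'o \<Rightarrow> 'm"
    and Yc :: "'io \<Rightarrow> ('o, 'm, 'k) kcat"
    and L R :: "'io \<Rightarrow> ('o, 'm) func"
    and \<epsilon> \<zeta> :: "'io \<Rightarrow> 'o \<Rightarrow> 'm"
  assumes category_I [simp]: "is_category I"
    and oplax_X: "is_oplax_functor I Xc Xf \<eta> \<theta>"
    and kcategory_Y: "\<forall>i\<in>Ob I. is_kcategory (Yc i)"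
    and adjunction: "\<forall>i\<in>Ob I. is_adjunction (Xc i) (Yc i) (L i) (R i) (\<epsilon> i) (\<zeta> i)"
begin

lemma hom_I_D:
  assumes "a \<in> Hom I i j"
  shows "arr I a" "arr_dom I a = i" "arr_cod I a = j" "i \<in> Ob I" "j \<in> Ob I"
  using assms hom_iff[OF category_I] hom_ob[OF category_I] by blast+

lemma category_X [simp]: "i \<in> Ob I \<Longrightarrow> is_category (Xc i)"
  using oplax_X kcategory_is_category unfolding is_oplax_functor_def by (elim conjE) fast

lemma category_Y [simp]: "i \<in> Ob I \<Longrightarrow> is_category (Yc i)"
  using kcategory_Y kcategory_is_category by blast

lemma kfunctor_Xf_hom: "a \<in> Hom I i j \<Longrightarrow> is_kfunctor (Xc i) (Xc j) (Xf a)"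
  using oplax_X unfolding is_oplax_functor_def by (elim conjE) fast

lemma kfunctor_Xf: "arr I a \<Longrightarrow> is_kfunctor (Xc (arr_dom I a)) (Xc (arr_cod I a)) (Xf a)"
  using kfunctor_Xf_hom arr_hom[OF category_I] by blast

lemma nat_trans_\<eta>: "i \<in> Ob I \<Longrightarrow> is_nat_trans (Xc i) (Xc i) (Xf (idm I i)) idF (\<eta> i)"
  using oplax_X unfolding is_oplax_functor_def by (elim conjE) fast

lemma nat_trans_\<theta>_hom: "a \<in> Hom I i j \<Longrightarrow> b \<in> Hom I j k \<Longrightarrow>
    is_nat_trans (Xc i) (Xc k) (Xf (cmp I b a)) (fcompose (Xf b) (Xf a)) (\<theta> b a)"
  using oplax_X unfolding is_oplax_functor_def by (elim conjE) fast

lemma nat_trans_\<theta>: "arr I a \<Longrightarrow> arr I b \<Longrightarrow> arr_cod I a = arr_dom I b \<Longrightarrow>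
    is_nat_trans (Xc (arr_dom I a)) (Xc (arr_cod I b)) (Xf (cmp I b a)) (fcompose (Xf b) (Xf a)) (\<theta> b a)"
  using nat_trans_\<theta>_hom arr_hom[OF category_I] by metis

lemma oplax_unit_left_X: "a \<in> Hom I i j \<Longrightarrow> x \<in> Ob (Xc i) \<Longrightarrow>
    cmp (Xc j) (fm (Xf a) (\<eta> i x)) (\<theta> a (idm I i) x) = idm (Xc j) (fo (Xf a) x)"
  using oplax_X unfolding is_oplax_functor_def by (elim conjE) fast

lemma oplax_unit_right_X: "a \<in> Hom I i j \<Longrightarrow> x \<in> Ob (Xc i) \<Longrightarrow>
    cmp (Xc j) (\<eta> j (fo (Xf a) x)) (\<theta> (idm I j) a x) = idm (Xc j) (fo (Xf a) x)"
  using oplax_X unfolding is_oplax_functor_def by (elim conjE) fast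

lemma oplax_assoc_X: "a \<in> Hom I i j \<Longrightarrow> b \<in> Hom I j k \<Longrightarrow> c \<in> Hom I k l \<Longrightarrow> x \<in> Ob (Xc i) \<Longrightarrow>
    cmp (Xc l) (fm (Xf c) (\<theta> b a x)) (\<theta> c (cmp I b a) x)
    = cmp (Xc l) (\<theta> c b (fo (Xf a) x)) (\<theta> (cmp I c b) a x)"
  using oplax_X unfolding is_oplax_functor_def by (elim conjE) fast

lemma kfunctor_L: "i \<in> Ob I \<Longrightarrow> is_kfunctor (Xc i) (Yc i) (L i)"
  using adjunction unfolding is_adjunction_def by auto

lemma kfunctor_R: "i \<in> Ob I \<Longrightarrow> is_kfunctor (Yc i) (Xc i) (R i)"
  using adjunction unfolding is_adjunction_def by auto

lemma nat_trans_\<epsilon>: "i \<in> Ob I \<Longrightarrow> is_nat_trans (Xc i) (Xc i) idF (fcompose (R i) (L i)) (\<epsilon> i)"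
  using adjunction unfolding is_adjunction_def by auto

lemma nat_trans_\<zeta>: "i \<in> Ob I \<Longrightarrow> is_nat_trans (Yc i) (Yc i) (fcompose (L i) (R i)) idF (\<zeta> i)"
  using adjunction unfolding is_adjunction_def by auto

lemma triangle_L: "i \<in> Ob I \<Longrightarrow> x \<in> Ob (Xc i) \<Longrightarrow>
    cmp (Yc i) (\<zeta> i (fo (L i) x)) (fm (L i) (\<epsilon> i x)) = idm (Yc i) (fo (L i) x)"
  using adjunction unfolding is_adjunction_def by auto

lemma triangle_R: "i \<in> Ob I \<Longrightarrow> y \<in> Ob (Yc i) \<Longrightarrow>
    cmp (Xc i) (fm (R i) (\<zeta> i y)) (\<epsilon> i (fo (R i) y)) = idm (Xc i) (fo (R i) y)"
  using adjunction unfolding is_adjunction_def by auto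

lemma Xf_ob [simp]: "arr I a \<Longrightarrow> arr_cod I a = j \<Longrightarrow> x \<in> Ob (Xc (arr_dom I a)) \<Longrightarrow>
    fo (Xf a) x \<in> Ob (Xc j)"
  using kfunctor_ob[OF kfunctor_Xf] by blast

lemma Xf_arr [simp]: "arr I a \<Longrightarrow> arr_cod I a = j \<Longrightarrow> arr (Xc (arr_dom I a)) f \<Longrightarrow>
    arr (Xc j) (fm (Xf a) f)"
  using kfunctor_arr[OF kfunctor_Xf] by (metis category_X category_I dom_ob cod_ob)

lemma Xf_dom [simp]: "arr I a \<Longrightarrow> arr_cod I a = j \<Longrightarrow> arr (Xc (arr_dom I a)) f \<Longrightarrow>
    arr_dom (Xc j) (fm (Xf a) f) = fo (Xf a) (arr_dom (Xc (arr_dom I a)) f)"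
  using kfunctor_dom[OF kfunctor_Xf] by (metis category_X category_I dom_ob cod_ob)

lemma Xf_cod [simp]: "arr I a \<Longrightarrow> arr_cod I a = j \<Longrightarrow> arr (Xc (arr_dom I a)) f \<Longrightarrow>
    arr_cod (Xc j) (fm (Xf a) f) = fo (Xf a) (arr_cod (Xc (arr_dom I a)) f)"
  using kfunctor_cod[OF kfunctor_Xf] by (metis category_X category_I dom_ob cod_ob)

lemma Xf_cmp [simp]: "arr I a \<Longrightarrow> arr_dom I a = i \<Longrightarrow> arr (Xc i) f \<Longrightarrow> arr (Xc i) g \<Longrightarrow>
    arr_cod (Xc i) f = arr_dom (Xc i) g \<Longrightarrow>
    fm (Xf a) (cmp (Xc i) g f) = cmp (Xc (arr_cod I a)) (fm (Xf a) g) (fm (Xf a) f)"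
  using kfunctor_cmp[OF kfunctor_Xf] by (metis category_X category_I dom_ob)

lemma Xf_idm [simp]: "arr I a \<Longrightarrow> arr_dom I a = i \<Longrightarrow> x \<in> Ob (Xc i) \<Longrightarrow>
    fm (Xf a) (idm (Xc i) x) = idm (Xc (arr_cod I a)) (fo (Xf a) x)"
  using kfunctor_idm[OF kfunctor_Xf] by blast

lemma L_ob [simp]: "i \<in> Ob I \<Longrightarrow> x \<in> Ob (Xc i) \<Longrightarrow> fo (L i) x \<in> Ob (Yc i)"
  by (rule kfunctor_ob[OF kfunctor_L])
lemma L_arr [simp]: "i \<in> Ob I \<Longrightarrow> arr (Xc i) f \<Longrightarrow> arr (Yc i) (fm (L i) f)"
  by (rule kfunctor_arr[OF kfunctor_L category_X category_Y])
lemma L_dom [simp]: "i \<in> Ob I \<Longrightarrow> arr (Xc i) f \<Longrightarrow> arr_dom (Yc i) (fm (L i) f) = fo (L i) (arr_dom (Xc i) f)"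
  by (rule kfunctor_dom[OF kfunctor_L category_X category_Y])
lemma L_cod [simp]: "i \<in> Ob I \<Longrightarrow> arr (Xc i) f \<Longrightarrow> arr_cod (Yc i) (fm (L i) f) = fo (L i) (arr_cod (Xc i) f)"
  by (rule kfunctor_cod[OF kfunctor_L category_X category_Y])
lemma L_cmp [simp]: "i \<in> Ob I \<Longrightarrow> arr (Xc i) f \<Longrightarrow> arr (Xc i) g \<Longrightarrow> arr_cod (Xc i) f = arr_dom (Xc i) g \<Longrightarrow>
    fm (L i) (cmp (Xc i) g f) = cmp (Yc i) (fm (L i) g) (fm (L i) f)"
  by (rule kfunctor_cmp[OF kfunctor_L category_X])
lemma L_idm [simp]: "i \<in> Ob I \<Longrightarrow> x \<in> Ob (Xc i) \<Longrightarrow> fm (L i) (idm (Xc i) x) = idm (Yc i) (fo (L i) x)"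
  by (rule kfunctor_idm[OF kfunctor_L])

lemma R_ob [simp]: "i \<in> Ob I \<Longrightarrow> y \<in> Ob (Yc i) \<Longrightarrow> fo (R i) y \<in> Ob (Xc i)"
  by (rule kfunctor_ob[OF kfunctor_R])
lemma R_arr [simp]: "i \<in> Ob I \<Longrightarrow> arr (Yc i) f \<Longrightarrow> arr (Xc i) (fm (R i) f)"
  by (rule kfunctor_arr[OF kfunctor_R category_Y category_X])
lemma R_dom [simp]: "i \<in> Ob I \<Longrightarrow> arr (Yc i) f \<Longrightarrow> arr_dom (Xc i) (fm (R i) f) = fo (R i) (arr_dom (Yc i) f)"
  by (rule kfunctor_dom[OF kfunctor_R category_Y category_X])
lemma R_cod [simp]: "i \<in> Ob I \<Longrightarrow> arr (Yc i) f \<Longrightarrow> arr_cod (Xc i) (fm (R i) f) = fo (R i) (arr_cod (Yc i) f)"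
  by (rule kfunctor_cod[OF kfunctor_R category_Y category_X])
lemma R_cmp [simp]: "i \<in> Ob I \<Longrightarrow> arr (Yc i) f \<Longrightarrow> arr (Yc i) g \<Longrightarrow> arr_cod (Yc i) f = arr_dom (Yc i) g \<Longrightarrow>
    fm (R i) (cmp (Yc i) g f) = cmp (Xc i) (fm (R i) g) (fm (R i) f)"
  by (rule kfunctor_cmp[OF kfunctor_R category_Y])
lemma R_idm [simp]: "i \<in> Ob I \<Longrightarrow> y \<in> Ob (Yc i) \<Longrightarrow> fm (R i) (idm (Yc i) y) = idm (Xc i) (fo (R i) y)"
  by (rule kfunctor_idm[OF kfunctor_R])

lemma \<epsilon>_arr [simp]: "i \<in> Ob I \<Longrightarrow> x \<in> Ob (Xc i) \<Longrightarrow> arr (Xc i) (\<epsilon> i x)"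
  by (rule nat_trans_arr[OF nat_trans_\<epsilon> category_X])
lemma \<epsilon>_dom [simp]: "i \<in> Ob I \<Longrightarrow> x \<in> Ob (Xc i) \<Longrightarrow> arr_dom (Xc i) (\<epsilon> i x) = x"
  using nat_trans_dom[OF nat_trans_\<epsilon> category_X] by simp
lemma \<epsilon>_cod [simp]: "i \<in> Ob I \<Longrightarrow> x \<in> Ob (Xc i) \<Longrightarrow> arr_cod (Xc i) (\<epsilon> i x) = fo (R i) (fo (L i) x)"
  using nat_trans_cod[OF nat_trans_\<epsilon> category_X] by simp
lemma \<epsilon>_naturality: "i \<in> Ob I \<Longrightarrow> arr (Xc i) f \<Longrightarrow>
    cmp (Xc i) (fm (R i) (fm (L i) f)) (\<epsilon> i (arr_dom (Xc i) f)) = cmp (Xc i) (\<epsilon> i (arr_cod (Xc i) f)) f"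
  using nat_trans_naturality[OF nat_trans_\<epsilon> category_X] by simp

lemma \<zeta>_arr [simp]: "i \<in> Ob I \<Longrightarrow> y \<in> Ob (Yc i) \<Longrightarrow> arr (Yc i) (\<zeta> i y)"
  by (rule nat_trans_arr[OF nat_trans_\<zeta> category_Y])
lemma \<zeta>_dom [simp]: "i \<in> Ob I \<Longrightarrow> y \<in> Ob (Yc i) \<Longrightarrow> arr_dom (Yc i) (\<zeta> i y) = fo (L i) (fo (R i) y)"
  using nat_trans_dom[OF nat_trans_\<zeta> category_Y] by simp
lemma \<zeta>_cod [simp]: "i \<in> Ob I \<Longrightarrow> y \<in> Ob (Yc i) \<Longrightarrow> arr_cod (Yc i) (\<zeta> i y) = y"
  using nat_trans_cod[OF nat_trans_\<zeta> category_Y] by simp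

lemma \<eta>_arr [simp]: "i \<in> Ob I \<Longrightarrow> x \<in> Ob (Xc i) \<Longrightarrow> arr (Xc i) (\<eta> i x)"
  by (rule nat_trans_arr[OF nat_trans_\<eta> category_X])
lemma \<eta>_dom [simp]: "i \<in> Ob I \<Longrightarrow> x \<in> Ob (Xc i) \<Longrightarrow> arr_dom (Xc i) (\<eta> i x) = fo (Xf (idm I i)) x"
  by (rule nat_trans_dom[OF nat_trans_\<eta> category_X])
lemma \<eta>_cod [simp]: "i \<in> Ob I \<Longrightarrow> x \<in> Ob (Xc i) \<Longrightarrow> arr_cod (Xc i) (\<eta> i x) = x"
  using nat_trans_cod[OF nat_trans_\<eta> category_X] by simp
lemma \<eta>_naturality: "i \<in> Ob I \<Longrightarrow> arr (Xc i) f \<Longrightarrow>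
    cmp (Xc i) f (\<eta> i (arr_dom (Xc i) f)) = cmp (Xc i) (\<eta> i (arr_cod (Xc i) f)) (fm (Xf (idm I i)) f)"
  using nat_trans_naturality[OF nat_trans_\<eta> category_X] by simp

lemma \<theta>_arr [simp]: "arr I a \<Longrightarrow> arr I b \<Longrightarrow> arr_cod I a = arr_dom I b \<Longrightarrow> arr_cod I b = k \<Longrightarrow>
    x \<in> Ob (Xc (arr_dom I a)) \<Longrightarrow> arr (Xc k) (\<theta> b a x)"
  using nat_trans_arr[OF nat_trans_\<theta>] by (metis category_X category_I cod_ob)
lemma \<theta>_dom [simp]: "arr I a \<Longrightarrow> arr I b \<Longrightarrow> arr_cod I a = arr_dom I b \<Longrightarrow> arr_cod I b = k \<Longrightarrow>
    x \<in> Ob (Xc (arr_dom I a)) \<Longrightarrow> arr_dom (Xc k) (\<theta> b a x) = fo (Xf (cmp I b a)) x"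
  using nat_trans_dom[OF nat_trans_\<theta>] by (metis category_X category_I cod_ob)
lemma \<theta>_cod [simp]: "arr I a \<Longrightarrow> arr I b \<Longrightarrow> arr_cod I a = arr_dom I b \<Longrightarrow> arr_cod I b = k \<Longrightarrow>
    x \<in> Ob (Xc (arr_dom I a)) \<Longrightarrow> arr_cod (Xc k) (\<theta> b a x) = fo (Xf b) (fo (Xf a) x)"
  using nat_trans_cod[OF nat_trans_\<theta>] by (metis category_X category_I cod_ob comp_apply fo_fm_fcompose(1))
lemma \<theta>_naturality: "arr I a \<Longrightarrow> arr I b \<Longrightarrow> arr_cod I a = arr_dom I b \<Longrightarrow> arr (Xc (arr_dom I a)) f \<Longrightarrow>
    cmp (Xc (arr_cod I b)) (fm (Xf b) (fm (Xf a) f)) (\<theta> b a (arr_dom (Xc (arr_dom I a)) f))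
    = cmp (Xc (arr_cod I b)) (\<theta> b a (arr_cod (Xc (arr_dom I a)) f)) (fm (Xf (cmp I b a)) f)"
  using nat_trans_naturality[OF nat_trans_\<theta>] by (metis category_X category_I dom_ob comp_apply fo_fm_fcompose(2))

abbreviation Yf :: "'ia \<Rightarrow> ('o, 'm) func" where
  "Yf a \<equiv> fcompose (L (arr_cod I a)) (fcompose (Xf a) (R (arr_dom I a)))"

abbreviation \<eta>' :: "'io \<Rightarrow> 'o \<Rightarrow> 'm" where
  "\<eta>' i y \<equiv> cmp (Yc i) (\<zeta> i y) (fm (L i) (\<eta> i (fo (R i) y)))"

abbreviation \<theta>' :: "'ia \<Rightarrow> 'ia \<Rightarrow> 'o \<Rightarrow> 'm" where
  "\<theta>' b a y \<equiv> cmp (Yc (arr_cod I b))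
     (fm (L (arr_cod I b)) (fm (Xf b) (\<epsilon> (arr_cod I a) (fo (Xf a) (fo (R (arr_dom I a)) y)))))
     (fm (L (arr_cod I b)) (\<theta> b a (fo (R (arr_dom I a)) y)))"

abbreviation \<phi>R :: "'ia \<Rightarrow> 'o \<Rightarrow> 'm" where
  "\<phi>R a y \<equiv> \<epsilon> (arr_cod I a) (fo (Xf a) (fo (R (arr_dom I a)) y))"

lemma kfunctor_L_Xf_R: "a \<in> Hom I i j \<Longrightarrow>
    is_kfunctor (Yc i) (Yc j) (fcompose (L j) (fcompose (Xf a) (R i)))"
  using hom_I_D kfunctor_fcompose kfunctor_Xf_hom kfunctor_L kfunctor_R by metis

lemma kfunctor_Yf: "a \<in> Hom I i j \<Longrightarrow> is_kfunctor (Yc i) (Yc j) (Yf a)"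
  using hom_I_D kfunctor_L_Xf_R by metis

lemma nat_trans_\<eta>': assumes i: "i \<in> Ob I"
  shows "is_nat_trans (Yc i) (Yc i) (Yf (idm I i)) idF (\<eta>' i)"
proof -
  have id: "idm I i \<in> Hom I i i" by (rule idm_hom[OF category_I i])
  have "is_nat_trans (Yc i) (Yc i) (fcompose (L i) (fcompose (Xf (idm I i)) (R i))) (fcompose (L i) (R i))
      (\<lambda>y. fm (L i) (\<eta> i (fo (R i) y)))"
    using nat_trans_whisker_left[OF category_Y[OF i] nat_trans_whisker_right[OF nat_trans_\<eta>[OF i] kfunctor_R[OF i]]
        kfunctor_fcompose[OF kfunctor_R[OF i] kfunctor_Xf_hom[OF id]]
        kfunctor_fcompose[OF kfunctor_R[OF i] kfunctor_idF] kfunctor_L[OF i]]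
    by simp
  from nat_trans_vcomp[OF category_Y[OF i] category_Y[OF i] kfunctor_L_Xf_R[OF id]
      kfunctor_fcompose[OF kfunctor_R[OF i] kfunctor_L[OF i]] kfunctor_idF this nat_trans_\<zeta>[OF i]]
  show ?thesis using hom_I_D[OF id] by simp
qed

lemma nat_trans_\<theta>': assumes a: "a \<in> Hom I i j" and b: "b \<in> Hom I j k"
  shows "is_nat_trans (Yc i) (Yc k) (Yf (cmp I b a)) (fcompose (Yf b) (Yf a)) (\<theta>' b a)"
proof -
  note i = hom_I_D(4)[OF a] and j = hom_I_D(4)[OF b] and k = hom_I_D(5)[OF b]
  have ba: "cmp I b a \<in> Hom I i k" by (rule cmp_hom[OF category_I a b])
  have Xa_R: "is_kfunctor (Yc i) (Xc j) (fcompose (Xf a) (R i))"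
    by (rule kfunctor_fcompose[OF kfunctor_R[OF i] kfunctor_Xf_hom[OF a]])
  have L_Xb: "is_kfunctor (Xc j) (Yc k) (fcompose (L k) (Xf b))"
    by (rule kfunctor_fcompose[OF kfunctor_Xf_hom[OF b] kfunctor_L[OF k]])
  have L_Xb_Xa_R: "is_kfunctor (Yc i) (Yc k) (fcompose (L k) (fcompose (Xf b) (fcompose (Xf a) (R i))))"
    using kfunctor_fcompose[OF Xa_R L_Xb] by simp
  have Yb_Ya: "is_kfunctor (Yc i) (Yc k) (fcompose (L k) (fcompose (Xf b) (fcompose (R j) (fcompose (L j) (fcompose (Xf a) (R i))))))"
    using kfunctor_fcompose[OF kfunctor_L_Xf_R[OF a] kfunctor_L_Xf_R[OF b]] by simp
  have L\<theta>R: "is_nat_trans (Yc i) (Yc k) (fcompose (L k) (fcompose (Xf (cmp I b a)) (R i)))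
      (fcompose (L k) (fcompose (Xf b) (fcompose (Xf a) (R i)))) (\<lambda>y. fm (L k) (\<theta> b a (fo (R i) y)))"
    using nat_trans_whisker_left[OF category_Y[OF i] nat_trans_whisker_right[OF nat_trans_\<theta>_hom[OF a b] kfunctor_R[OF i]]
        kfunctor_fcompose[OF kfunctor_R[OF i] kfunctor_Xf_hom[OF ba]]
        kfunctor_fcompose[OF kfunctor_R[OF i] kfunctor_fcompose[OF kfunctor_Xf_hom[OF a] kfunctor_Xf_hom[OF b]]]
        kfunctor_L[OF k]]
    by simp
  have LX\<epsilon>XR: "is_nat_trans (Yc i) (Yc k) (fcompose (L k) (fcompose (Xf b) (fcompose (Xf a) (R i))))
      (fcompose (L k) (fcompose (Xf b) (fcompose (R j) (fcompose (L j) (fcompose (Xf a) (R i))))))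
      (\<lambda>y. fm (L k) (fm (Xf b) (\<epsilon> j (fo (Xf a) (fo (R i) y)))))"
    using nat_trans_whisker_right[OF nat_trans_whisker_left[OF category_X[OF j] nat_trans_\<epsilon>[OF j] kfunctor_idF
          kfunctor_fcompose[OF kfunctor_L[OF j] kfunctor_R[OF j]] L_Xb] Xa_R]
    by simp
  from nat_trans_vcomp[OF category_Y[OF i] category_Y[OF k] kfunctor_L_Xf_R[OF ba] L_Xb_Xa_R Yb_Ya L\<theta>R LX\<epsilon>XR]
  show ?thesis using hom_I_D[OF a] hom_I_D[OF b] hom_I_D[OF ba] by simp
qed

lemma nat_trans_\<phi>R: assumes a: "a \<in> Hom I i j"
  shows "is_nat_trans (Yc i) (Xc j) (fcompose (Xf a) (R i)) (fcompose (R j) (Yf a)) (\<phi>R a)"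
  using nat_trans_whisker_right[OF nat_trans_\<epsilon>[OF hom_I_D(5)[OF a]]
      kfunctor_fcompose[OF kfunctor_R[OF hom_I_D(4)[OF a]] kfunctor_Xf_hom[OF a]]] hom_I_D[OF a]
  by simp

lemma oplax_unit_left_Y: assumes a0: "a \<in> Hom I i j" and y: "y \<in> Ob (Yc i)"
  shows "cmp (Yc j) (fm (Yf a) (\<eta>' i y)) (\<theta>' a (idm I i) y) = idm (Yc j) (fo (Yf a) y)"
proof -
  note a = hom_I_D[OF a0]
  have x: "fo (R i) y \<in> Ob (Xc i)" using a y by simp
  have \<epsilon>_nat: "cmp (Yc j) (fm (L j) (fm (Xf a) (fm (R i) (fm (L i) (\<eta> i (fo (R i) y))))))
        (fm (L j) (fm (Xf a) (\<epsilon> i (fo (Xf (idm I i)) (fo (R i) y)))))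
      = cmp (Yc j) (fm (L j) (fm (Xf a) (\<epsilon> i (fo (R i) y)))) (fm (L j) (fm (Xf a) (\<eta> i (fo (R i) y))))"
    using arg_cong[OF \<epsilon>_naturality[OF a(4) \<eta>_arr[OF a(4) x]], of "\<lambda>f. fm (L j) (fm (Xf a) f)"] a y by simp
  have triangle: "cmp (Yc j) (fm (L j) (fm (Xf a) (fm (R i) (\<zeta> i y)))) (fm (L j) (fm (Xf a) (\<epsilon> i (fo (R i) y))))
      = idm (Yc j) (fo (L j) (fo (Xf a) (fo (R i) y)))"
    using arg_cong[OF triangle_R[OF a(4) y], of "\<lambda>f. fm (L j) (fm (Xf a) f)"] a y by simp
  have unit_X: "cmp (Yc j) (fm (L j) (fm (Xf a) (\<eta> i (fo (R i) y)))) (fm (L j) (\<theta> a (idm I i) (fo (R i) y)))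
      = idm (Yc j) (fo (L j) (fo (Xf a) (fo (R i) y)))"
    using arg_cong[OF oplax_unit_left_X[OF a0 x], of "fm (L j)"] a y by simp
  show ?thesis using a y
    by (simp add: cmp_eq_assoc[OF category_Y[OF a(5)] \<epsilon>_nat]
        cmp_inverse_assoc[OF category_Y[OF a(5)] triangle] triangle unit_X)
qed

lemma oplax_unit_right_Y: assumes a0: "a \<in> Hom I i j" and y: "y \<in> Ob (Yc i)"
  shows "cmp (Yc j) (\<eta>' j (fo (Yf a) y)) (\<theta>' (idm I j) a y) = idm (Yc j) (fo (Yf a) y)"
proof -
  note a = hom_I_D[OF a0]
  have x: "fo (R i) y \<in> Ob (Xc i)" and z: "fo (Xf a) (fo (R i) y) \<in> Ob (Xc j)" using a y by simp_all
  have \<eta>_nat: "cmp (Yc j) (fm (L j) (\<eta> j (fo (R j) (fo (L j) (fo (Xf a) (fo (R i) y))))))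
        (fm (L j) (fm (Xf (idm I j)) (\<epsilon> j (fo (Xf a) (fo (R i) y)))))
      = cmp (Yc j) (fm (L j) (\<epsilon> j (fo (Xf a) (fo (R i) y)))) (fm (L j) (\<eta> j (fo (Xf a) (fo (R i) y))))"
    using arg_cong[OF \<eta>_naturality[OF a(5) \<epsilon>_arr[OF a(5) z]], of "fm (L j)"] a z by simp
  have triangle: "cmp (Yc j) (\<zeta> j (fo (L j) (fo (Xf a) (fo (R i) y)))) (fm (L j) (\<epsilon> j (fo (Xf a) (fo (R i) y))))
      = idm (Yc j) (fo (L j) (fo (Xf a) (fo (R i) y)))"
    by (rule triangle_L[OF a(5) z])
  have unit_X: "cmp (Yc j) (fm (L j) (\<eta> j (fo (Xf a) (fo (R i) y)))) (fm (L j) (\<theta> (idm I j) a (fo (R i) y)))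
      = idm (Yc j) (fo (L j) (fo (Xf a) (fo (R i) y)))"
    using arg_cong[OF oplax_unit_right_X[OF a0 x], of "fm (L j)"] a y by simp
  show ?thesis using a y z
    by (simp add: cmp_eq_assoc[OF category_Y[OF a(5)] \<eta>_nat]
        cmp_inverse_assoc[OF category_Y[OF a(5)] triangle] triangle unit_X)
qed

text \<open>Two naturality squares of \<open>\<epsilon>\<close> and one of \<open>\<theta>\<close> reduce both sides to \<open>L\<close> applied to
  the associativity axiom of X.\<close>

lemma oplax_assoc_Y:
  assumes a0: "a \<in> Hom I i j" and b0: "b \<in> Hom I j k" and c0: "c \<in> Hom I k l" and y: "y \<in> Ob (Yc i)"
  shows "cmp (Yc l) (fm (Yf c) (\<theta>' b a y)) (\<theta>' c (cmp I b a) y)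
       = cmp (Yc l) (\<theta>' c b (fo (Yf a) y)) (\<theta>' (cmp I c b) a y)"
proof -
  note a = hom_I_D[OF a0] and b = hom_I_D[OF b0] and c = hom_I_D[OF c0]
  have x: "fo (R i) y \<in> Ob (Xc i)" using a y by simp
  have \<theta>_arr: "arr (Xc k) (\<theta> b a (fo (R i) y))"
    and X\<epsilon>_arr: "arr (Xc k) (fm (Xf b) (\<epsilon> j (fo (Xf a) (fo (R i) y))))"
    and \<epsilon>_arr: "arr (Xc j) (\<epsilon> j (fo (Xf a) (fo (R i) y)))"
    using a b x by simp_all
  have \<epsilon>_nat_\<theta>: "cmp (Yc l) (fm (L l) (fm (Xf c) (fm (R k) (fm (L k) (\<theta> b a (fo (R i) y))))))
        (fm (L l) (fm (Xf c) (\<epsilon> k (fo (Xf (cmp I b a)) (fo (R i) y)))))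
      = cmp (Yc l) (fm (L l) (fm (Xf c) (\<epsilon> k (fo (Xf b) (fo (Xf a) (fo (R i) y))))))
        (fm (L l) (fm (Xf c) (\<theta> b a (fo (R i) y))))"
    using a b c x arg_cong[OF \<epsilon>_naturality[OF b(5) \<theta>_arr], of "\<lambda>f. fm (L l) (fm (Xf c) f)"] by simp
  have \<epsilon>_nat_\<epsilon>: "cmp (Yc l) (fm (L l) (fm (Xf c) (fm (R k) (fm (L k) (fm (Xf b) (\<epsilon> j (fo (Xf a) (fo (R i) y))))))))
        (fm (L l) (fm (Xf c) (\<epsilon> k (fo (Xf b) (fo (Xf a) (fo (R i) y))))))
      = cmp (Yc l) (fm (L l) (fm (Xf c) (\<epsilon> k (fo (Xf b) (fo (R j) (fo (L j) (fo (Xf a) (fo (R i) y))))))))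
        (fm (L l) (fm (Xf c) (fm (Xf b) (\<epsilon> j (fo (Xf a) (fo (R i) y))))))"
    using a b c x arg_cong[OF \<epsilon>_naturality[OF b(5) X\<epsilon>_arr], of "\<lambda>f. fm (L l) (fm (Xf c) f)"] by simp
  have \<theta>_nat_\<epsilon>: "cmp (Yc l) (fm (L l) (\<theta> c b (fo (R j) (fo (L j) (fo (Xf a) (fo (R i) y))))))
        (fm (L l) (fm (Xf (cmp I c b)) (\<epsilon> j (fo (Xf a) (fo (R i) y)))))
      = cmp (Yc l) (fm (L l) (fm (Xf c) (fm (Xf b) (\<epsilon> j (fo (Xf a) (fo (R i) y))))))
        (fm (L l) (\<theta> c b (fo (Xf a) (fo (R i) y))))"
    using a b c x \<epsilon>_arr
      arg_cong[OF \<theta>_naturality[OF b(1) c(1) _, of "\<epsilon> j (fo (Xf a) (fo (R i) y))"], of "fm (L l)"]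
    by (simp del: L_cmp add: L_cmp[symmetric])
  have assoc_X: "cmp (Yc l) (fm (L l) (\<theta> c b (fo (Xf a) (fo (R i) y)))) (fm (L l) (\<theta> (cmp I c b) a (fo (R i) y)))
      = cmp (Yc l) (fm (L l) (fm (Xf c) (\<theta> b a (fo (R i) y)))) (fm (L l) (\<theta> c (cmp I b a) (fo (R i) y)))"
    using a b c x arg_cong[OF oplax_assoc_X[OF a0 b0 c0 x], of "fm (L l)"] by simp
  show ?thesis using a b c y x
    by (simp add: cmp_eq_assoc[OF category_Y[OF c(5)] \<epsilon>_nat_\<theta>] cmp_eq_assoc[OF category_Y[OF c(5)] \<epsilon>_nat_\<epsilon>]
        cmp_eq_assoc[OF category_Y[OF c(5)] \<theta>_nat_\<epsilon>] assoc_X)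
qed

lemma oplax_functor_Y: "is_oplax_functor I Yc Yf \<eta>' \<theta>'"
  unfolding is_oplax_functor_def
  by (intro conjI allI impI ballI; (elim conjE)?)
    (simp_all only: kcategory_Y kfunctor_Yf nat_trans_\<eta>' nat_trans_\<theta>'
      oplax_unit_left_Y oplax_unit_right_Y oplax_assoc_Y)

lemma \<phi>R_unit: assumes i: "i \<in> Ob I" and y: "y \<in> Ob (Yc i)"
  shows "cmp (Xc i) (fm (R i) (\<eta>' i y)) (\<phi>R (idm I i) y) = \<eta> i (fo (R i) y)"
proof -
  have x: "fo (R i) y \<in> Ob (Xc i)" using i y by simp
  have \<epsilon>_nat: "cmp (Xc i) (fm (R i) (fm (L i) (\<eta> i (fo (R i) y)))) (\<epsilon> i (fo (Xf (idm I i)) (fo (R i) y)))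
      = cmp (Xc i) (\<epsilon> i (fo (R i) y)) (\<eta> i (fo (R i) y))"
    using i x \<epsilon>_naturality[OF i \<eta>_arr[OF i x]] by simp
  show ?thesis using i y x
    by (simp add: \<epsilon>_nat cmp_inverse_assoc[OF category_X[OF i] triangle_R[OF i y]])
qed

lemma \<phi>R_cmp: assumes a0: "a \<in> Hom I i j" and b0: "b \<in> Hom I j k" and y: "y \<in> Ob (Yc i)"
  shows "cmp (Xc k) (fm (R k) (\<theta>' b a y)) (\<phi>R (cmp I b a) y)
       = cmp (Xc k) (\<phi>R b (fo (Yf a) y)) (cmp (Xc k) (fm (Xf b) (\<phi>R a y)) (\<theta> b a (fo (R i) y)))"
proof -
  note a = hom_I_D[OF a0] and b = hom_I_D[OF b0]
  have x: "fo (R i) y \<in> Ob (Xc i)" using a y by simp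
  have \<theta>_arr: "arr (Xc k) (\<theta> b a (fo (R i) y))"
    and X\<epsilon>_arr: "arr (Xc k) (fm (Xf b) (\<epsilon> j (fo (Xf a) (fo (R i) y))))"
    using a b x by simp_all
  have \<epsilon>_nat_\<theta>: "cmp (Xc k) (fm (R k) (fm (L k) (\<theta> b a (fo (R i) y)))) (\<epsilon> k (fo (Xf (cmp I b a)) (fo (R i) y)))
      = cmp (Xc k) (\<epsilon> k (fo (Xf b) (fo (Xf a) (fo (R i) y)))) (\<theta> b a (fo (R i) y))"
    using a b x \<epsilon>_naturality[OF b(5) \<theta>_arr] by simp
  have \<epsilon>_nat_\<epsilon>: "cmp (Xc k) (fm (R k) (fm (L k) (fm (Xf b) (\<epsilon> j (fo (Xf a) (fo (R i) y))))))
        (\<epsilon> k (fo (Xf b) (fo (Xf a) (fo (R i) y))))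
      = cmp (Xc k) (\<epsilon> k (fo (Xf b) (fo (R j) (fo (L j) (fo (Xf a) (fo (R i) y))))))
        (fm (Xf b) (\<epsilon> j (fo (Xf a) (fo (R i) y))))"
    using a b x \<epsilon>_naturality[OF b(5) X\<epsilon>_arr] by simp
  show ?thesis using a b y x
    by (simp add: cmp_eq_assoc[OF category_X[OF b(5)] \<epsilon>_nat_\<epsilon>] \<epsilon>_nat_\<theta>)
qed

lemma oplax_morphism_R: "is_oplax_morphism I Yc Yf \<eta>' \<theta>' Xc Xf \<eta> \<theta> R \<phi>R"
  unfolding is_oplax_morphism_def
  by (intro conjI allI impI ballI; (elim conjE)?)
    (simp_all only: kfunctor_R nat_trans_\<phi>R \<phi>R_unit \<phi>R_cmp)

lemma nat_iso_\<phi>R: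
  assumes \<epsilon>: "is_nat_iso (Xc j) (Xc j) idF (fcompose (R j) (L j)) (\<epsilon> j)" and a: "a \<in> Hom I i j"
  shows "is_nat_iso (Yc i) (Xc j) (fcompose (Xf a) (R i)) (fcompose (R j) (Yf a)) (\<phi>R a)"
  using nat_iso_whisker_right[OF \<epsilon> kfunctor_fcompose[OF kfunctor_R[OF hom_I_D(4)[OF a]] kfunctor_Xf_hom[OF a]]]
    hom_I_D[OF a]
  by simp

end

locale oplax_transport_invertible_unit = oplax_transport +
  fixes \<epsilon>inv
  assumes \<epsilon>inv_inverse: "\<forall>i\<in>Ob I. is_nat_trans (Xc i) (Xc i) (fcompose (R i) (L i)) idF (\<epsilon>inv i) \<and>
    (\<forall>x\<in>Ob (Xc i). cmp (Xc i) (\<epsilon>inv i x) (\<epsilon> i x) = idm (Xc i) x \<and>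
       cmp (Xc i) (\<epsilon> i x) (\<epsilon>inv i x) = idm (Xc i) (fo (R i) (fo (L i) x)))"
begin

lemma nat_trans_\<epsilon>inv: "i \<in> Ob I \<Longrightarrow> is_nat_trans (Xc i) (Xc i) (fcompose (R i) (L i)) idF (\<epsilon>inv i)"
  using \<epsilon>inv_inverse by blast

lemma \<epsilon>inv_\<epsilon>: "i \<in> Ob I \<Longrightarrow> x \<in> Ob (Xc i) \<Longrightarrow> cmp (Xc i) (\<epsilon>inv i x) (\<epsilon> i x) = idm (Xc i) x"
  using \<epsilon>inv_inverse by blast

lemma \<epsilon>_\<epsilon>inv: "i \<in> Ob I \<Longrightarrow> x \<in> Ob (Xc i) \<Longrightarrow>
    cmp (Xc i) (\<epsilon> i x) (\<epsilon>inv i x) = idm (Xc i) (fo (R i) (fo (L i) x))"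
  using \<epsilon>inv_inverse by blast

lemma nat_iso_\<epsilon>inv: "i \<in> Ob I \<Longrightarrow> is_nat_iso (Xc i) (Xc i) (fcompose (R i) (L i)) idF (\<epsilon>inv i)"
  unfolding is_nat_iso_def using nat_trans_\<epsilon>inv nat_trans_\<epsilon> \<epsilon>inv_\<epsilon> \<epsilon>_\<epsilon>inv
  by (intro conjI exI[of _ "\<epsilon> i"]) auto

lemma \<epsilon>inv_arr [simp]: "i \<in> Ob I \<Longrightarrow> x \<in> Ob (Xc i) \<Longrightarrow> arr (Xc i) (\<epsilon>inv i x)"
  by (rule nat_trans_arr[OF nat_trans_\<epsilon>inv category_X])
lemma \<epsilon>inv_dom [simp]: "i \<in> Ob I \<Longrightarrow> x \<in> Ob (Xc i) \<Longrightarrow> arr_dom (Xc i) (\<epsilon>inv i x) = fo (R i) (fo (L i) x)"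
  using nat_trans_dom[OF nat_trans_\<epsilon>inv category_X] by simp
lemma \<epsilon>inv_cod [simp]: "i \<in> Ob I \<Longrightarrow> x \<in> Ob (Xc i) \<Longrightarrow> arr_cod (Xc i) (\<epsilon>inv i x) = x"
  using nat_trans_cod[OF nat_trans_\<epsilon>inv category_X] by simp
lemma \<epsilon>inv_naturality: "i \<in> Ob I \<Longrightarrow> arr (Xc i) f \<Longrightarrow>
    cmp (Xc i) f (\<epsilon>inv i (arr_dom (Xc i) f)) = cmp (Xc i) (\<epsilon>inv i (arr_cod (Xc i) f)) (fm (R i) (fm (L i) f))"
  using nat_trans_naturality[OF nat_trans_\<epsilon>inv category_X] by simp

text \<open>By the triangle identity, \<open>\<zeta> L\<close> is a left inverse of \<open>L \<epsilon>\<close>, and \<open>L \<epsilon>inv\<close> is a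
  right inverse of it, so the two agree.\<close>

lemma L_\<epsilon>inv: assumes i: "i \<in> Ob I" and x: "x \<in> Ob (Xc i)"
  shows "fm (L i) (\<epsilon>inv i x) = \<zeta> i (fo (L i) x)"
proof -
  have L_\<epsilon>_\<epsilon>inv: "cmp (Yc i) (fm (L i) (\<epsilon> i x)) (fm (L i) (\<epsilon>inv i x)) = idm (Yc i) (fo (L i) (fo (R i) (fo (L i) x)))"
    using i x arg_cong[OF \<epsilon>_\<epsilon>inv[OF i x], of "fm (L i)"] by simp
  have "\<zeta> i (fo (L i) x) = cmp (Yc i) (\<zeta> i (fo (L i) x)) (idm (Yc i) (fo (L i) (fo (R i) (fo (L i) x))))"
    using i x by simp
  also have "\<dots> = cmp (Yc i) (\<zeta> i (fo (L i) x)) (cmp (Yc i) (fm (L i) (\<epsilon> i x)) (fm (L i) (\<epsilon>inv i x)))"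
    using L_\<epsilon>_\<epsilon>inv by simp
  also have "\<dots> = fm (L i) (\<epsilon>inv i x)"
    using i x by (simp add: cmp_inverse_assoc[OF category_Y[OF i] triangle_L[OF i x]])
  finally show ?thesis by simp
qed

abbreviation \<phi>L where
  "\<phi>L a x \<equiv> fm (L (arr_cod I a)) (fm (Xf a) (\<epsilon>inv (arr_dom I a) x))"

lemma nat_iso_\<phi>L: assumes a: "a \<in> Hom I i j"
  shows "is_nat_iso (Xc i) (Yc j) (fcompose (Yf a) (L i)) (fcompose (L j) (Xf a)) (\<phi>L a)"
proof -
  note i = hom_I_D(4)[OF a] and j = hom_I_D(5)[OF a]
  show ?thesis
    using nat_iso_whisker_left[OF category_X[OF i] nat_iso_\<epsilon>inv[OF i]
        kfunctor_fcompose[OF kfunctor_L[OF i] kfunctor_R[OF i]] kfunctor_idF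
        kfunctor_fcompose[OF kfunctor_Xf_hom[OF a] kfunctor_L[OF j]]] hom_I_D[OF a]
    by simp
qed

lemma \<phi>L_unit: assumes i: "i \<in> Ob I" and x: "x \<in> Ob (Xc i)"
  shows "cmp (Yc i) (fm (L i) (\<eta> i x)) (\<phi>L (idm I i) x) = \<eta>' i (fo (L i) x)"
proof -
  have "cmp (Yc i) (fm (L i) (\<eta> i x)) (fm (L i) (fm (Xf (idm I i)) (\<epsilon>inv i x)))
      = cmp (Yc i) (fm (L i) (\<epsilon>inv i x)) (fm (L i) (\<eta> i (fo (R i) (fo (L i) x))))"
    using i x arg_cong[OF \<eta>_naturality[OF i \<epsilon>inv_arr[OF i x]], of "fm (L i)"] by simp
  then show ?thesis using i x L_\<epsilon>inv[OF i x] by simp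
qed

lemma \<phi>L_cmp: assumes a0: "a \<in> Hom I i j" and b0: "b \<in> Hom I j k" and x: "x \<in> Ob (Xc i)"
  shows "cmp (Yc k) (fm (L k) (\<theta> b a x)) (\<phi>L (cmp I b a) x)
       = cmp (Yc k) (\<phi>L b (fo (Xf a) x)) (cmp (Yc k) (fm (Yf b) (\<phi>L a x)) (\<theta>' b a (fo (L i) x)))"
proof -
  note a = hom_I_D[OF a0] and b = hom_I_D[OF b0]
  have X\<epsilon>inv_arr: "arr (Xc j) (fm (Xf a) (\<epsilon>inv i x))"
    and z: "fo (Xf a) (fo (R i) (fo (L i) x)) \<in> Ob (Xc j)" using a x by simp_all
  have \<theta>_nat: "cmp (Yc k) (fm (L k) (\<theta> b a x)) (fm (L k) (fm (Xf (cmp I b a)) (\<epsilon>inv i x)))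
      = cmp (Yc k) (fm (L k) (fm (Xf b) (fm (Xf a) (\<epsilon>inv i x)))) (fm (L k) (\<theta> b a (fo (R i) (fo (L i) x))))"
    using a b x arg_cong[OF \<theta>_naturality[OF a(1) b(1) _, of "\<epsilon>inv i x"], of "fm (L k)"]
    by (simp del: L_cmp add: L_cmp[symmetric])
  have \<epsilon>inv_nat: "cmp (Yc k) (fm (L k) (fm (Xf b) (\<epsilon>inv j (fo (Xf a) x))))
        (fm (L k) (fm (Xf b) (fm (R j) (fm (L j) (fm (Xf a) (\<epsilon>inv i x))))))
      = cmp (Yc k) (fm (L k) (fm (Xf b) (fm (Xf a) (\<epsilon>inv i x))))
        (fm (L k) (fm (Xf b) (\<epsilon>inv j (fo (Xf a) (fo (R i) (fo (L i) x))))))"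
    using a b x arg_cong[OF \<epsilon>inv_naturality[OF a(5) X\<epsilon>inv_arr], of "\<lambda>f. fm (L k) (fm (Xf b) f)"] by simp
  have \<epsilon>inv_\<epsilon>_whiskered: "cmp (Yc k) (fm (L k) (fm (Xf b) (\<epsilon>inv j (fo (Xf a) (fo (R i) (fo (L i) x))))))
        (fm (L k) (fm (Xf b) (\<epsilon> j (fo (Xf a) (fo (R i) (fo (L i) x))))))
      = idm (Yc k) (fo (L k) (fo (Xf b) (fo (Xf a) (fo (R i) (fo (L i) x)))))"
    using a b z arg_cong[OF \<epsilon>inv_\<epsilon>[OF a(5) z], of "\<lambda>f. fm (L k) (fm (Xf b) f)"] by simp
  show ?thesis using a b x z
    by (simp add: \<theta>_nat cmp_eq_assoc[OF category_Y[OF b(5)] \<epsilon>inv_nat]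
        cmp_inverse_assoc[OF category_Y[OF b(5)] \<epsilon>inv_\<epsilon>_whiskered] \<epsilon>inv_\<epsilon>_whiskered)
qed

lemma oplax_morphism_L: "is_oplax_morphism I Xc Xf \<eta> \<theta> Yc Yf \<eta>' \<theta>' L \<phi>L"
  unfolding is_oplax_morphism_def
  using nat_iso_\<phi>L unfolding is_nat_iso_def
  by (intro conjI allI impI ballI; (elim conjE)?)
    (simp_all only: kfunctor_L \<phi>L_unit \<phi>L_cmp)

end

theorem lemma4p8:
  fixes I :: "('io, 'ia) cat"
    and Xc :: "'io \<Rightarrow> ('o, 'm, 'k::comm_ring_1) kcat"
    and Xf :: "'ia \<Rightarrow> ('o, 'm) func"
    and \<eta> :: "'io \<Rightarrow> 'o \<Rightarrow> 'm"
    and \<theta> :: "'ia \<Rightarrow> 'ia \<Rightarrow> 'o \<Rightarrow> 'm"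
    and Yc :: "'io \<Rightarrow> ('o, 'm, 'k) kcat"
    and L R :: "'io \<Rightarrow> ('o, 'm) func"
    and \<epsilon> \<zeta> :: "'io \<Rightarrow> 'o \<Rightarrow> 'm"
  assumes "is_category I"
    and "is_oplax_functor I Xc Xf \<eta> \<theta>"
    and "\<forall>i\<in>Ob I. is_kcategory (Yc i)"
    and "\<forall>i\<in>Ob I. is_adjunction (Xc i) (Yc i) (L i) (R i) (\<epsilon> i) (\<zeta> i)"
  defines "Yf \<equiv> \<lambda>a. fcompose (L (arr_cod I a)) (fcompose (Xf a) (R (arr_dom I a)))"
    and "\<eta>' \<equiv> \<lambda>i y. cmp (Yc i) (\<zeta> i y) (fm (L i) (\<eta> i (fo (R i) y)))"
    and "\<theta>' \<equiv> \<lambda>b a y.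
           cmp (Yc (arr_cod I b))
             (fm (L (arr_cod I b)) (fm (Xf b) (\<epsilon> (arr_cod I a) (fo (Xf a) (fo (R (arr_dom I a)) y)))))
             (fm (L (arr_cod I b)) (\<theta> b a (fo (R (arr_dom I a)) y)))"
    and "\<phi>R \<equiv> \<lambda>a y. \<epsilon> (arr_cod I a) (fo (Xf a) (fo (R (arr_dom I a)) y))"
  shows "is_oplax_functor I Yc Yf \<eta>' \<theta>'
    \<and> is_oplax_morphism I Yc Yf \<eta>' \<theta>' Xc Xf \<eta> \<theta> R \<phi>R
    \<and> ((\<forall>i\<in>Ob I. is_nat_iso (Xc i) (Xc i) idF (fcompose (R i) (L i)) (\<epsilon> i)) \<longrightarrow>
         (\<forall>i j a. a \<in> Hom I i j \<longrightarrow>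
            is_nat_iso (Yc i) (Xc j) (fcompose (Xf a) (R i)) (fcompose (R j) (Yf a)) (\<phi>R a))
       \<and> (\<forall>\<epsilon>inv. (\<forall>i\<in>Ob I. is_nat_trans (Xc i) (Xc i) (fcompose (R i) (L i)) idF (\<epsilon>inv i) \<and>
                    (\<forall>x\<in>Ob (Xc i). cmp (Xc i) (\<epsilon>inv i x) (\<epsilon> i x) = idm (Xc i) x \<and>
                       cmp (Xc i) (\<epsilon> i x) (\<epsilon>inv i x) = idm (Xc i) (fo (R i) (fo (L i) x))))
            \<longrightarrow> (let \<phi>L = (\<lambda>a x. fm (L (arr_cod I a)) (fm (Xf a) (\<epsilon>inv (arr_dom I a) x))) in
                 is_oplax_morphism I Xc Xf \<eta> \<theta> Yc Yf \<eta>' \<theta>' L \<phi>L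
                 \<and> (\<forall>i j a. a \<in> Hom I i j \<longrightarrow>
                      is_nat_iso (Xc i) (Yc j) (fcompose (Yf a) (L i)) (fcompose (L j) (Xf a)) (\<phi>L a)))))"
proof -
  interpret T: oplax_transport I Xc Xf \<eta> \<theta> Yc L R \<epsilon> \<zeta>
    using assms(1-4) by (rule oplax_transport.intro)
  note invertible_unit = oplax_transport_invertible_unit.intro[OF T.oplax_transport_axioms
      oplax_transport_invertible_unit_axioms.intro]
  show ?thesis
    unfolding assms(5-8) Let_def
    using T.oplax_functor_Y T.oplax_morphism_R T.nat_iso_\<phi>R T.hom_I_D(5)
      oplax_transport_invertible_unit.oplax_morphism_L[OF invertible_unit]
      oplax_transport_invertible_unit.nat_iso_\<phi>L[OF invertible_unit]
    by (intro conjI impI allI) blast+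
qed

end
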